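(* Let $F$ and $p$ be positive integers and let $a$ be the smallest positive integer that does not divide $F$. Then $\mathrm{Sat}(F)$ contains at least one element of $\mathrm{Sat}(F)$-rank equal to $p$ if and only if $a(2^p-1)<F$.
   Context: A numerical semigroup is a subset $S\subseteq\mathbb{N}$ closed under addition, containing $0$, with $\mathbb{N}\setminus S$ finite; its Frobenius number $\mathrm{F}(S)$ is the largest integer not in $S$. For $A\subseteq\mathbb{N}$ and $a\in A$, let $\mathrm{d}_A(a)=\gcd\{x\in A\mid x\le a\}$. A numerical semigroup $S$ is saturated if $s+\mathrm{d}_S(s)\in S$ for all $s\in S\setminus\{0\}$. For a positive integer $F$, $\mathrm{Sat}(F)$ denotes the set of all saturated numerical semigroups $S$ with $\mathrm{F}(S)=F$. Let $\Delta(F+1)=\{0\}\cup\{x\in\mathbb{N}\mid x\ge F+1\}$. A set $X\subseteq\mathbb{N}$ is a $\mathrm{Sat}(F)$-set if $X\cap\Delta(F+1)=\emptyset$ and there exists $S\in\mathrm{Sat}(F)$ with $X\subseteq S$. For a $\mathrm{Sat}(F)$-set $X$, $\mathrm{Sat}(F)[X]$ denotes the intersection of all elements of $\mathrm{Sat}(F)$ containing $X$ (the smallest element of $\mathrm{Sat}(F)$ containing $X$). If $S=\mathrm{Sat}(F)[X]$, $X$ is a $\mathrm{Sat}(F)$-system of generators of $S$; it is minimal if $S\neq\mathrm{Sat}(F)[Y]$ for every proper subset $Y\subsetneq X$. Every $S\in\mathrm{Sat}(F)$ has a unique minimal $\mathrm{Sat}(F)$-system of generators, and its cardinality is the $\mathrm{Sat}(F)$-rank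 of $S$. *)

theory Defs
  imports Main
begin

definition numerical_semigroup :: "nat set \<Rightarrow> bool" where
  "numerical_semigroup S \<longleftrightarrow> 0 \<in> S \<and> (\<forall>x\<in>S. \<forall>y\<in>S. x + y \<in> S) \<and> finite (UNIV - S)"

definition frobenius :: "nat set \<Rightarrow> nat" where
  "frobenius S = Max (UNIV - S)"

definition dA :: "nat set \<Rightarrow> nat \<Rightarrow> nat" where
  "dA A a = Gcd {x \<in> A. x \<le> a}"

definition saturated :: "nat set \<Rightarrow> bool" where
  "saturated S \<longleftrightarrow> numerical_semigroup S \<and> (\<forall>s\<in>S. s \<noteq> 0 \<longrightarrow> s + dA S s \<in> S)"

definition Sat :: "nat \<Rightarrow> nat set set" where
  "Sat F = {S. saturated S \<and> UNIV - S \<noteq> {} \<and> frobenius S = F}"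

definition Delta :: "nat \<Rightarrow> nat set" where
  "Delta m = {0} \<union> {x. x \<ge> m}"

definition Sat_set :: "nat \<Rightarrow> nat set \<Rightarrow> bool" where
  "Sat_set F X \<longleftrightarrow> X \<inter> Delta (F + 1) = {} \<and> (\<exists>S\<in>Sat F. X \<subseteq> S)"

definition Sat_hull :: "nat \<Rightarrow> nat set \<Rightarrow> nat set" where
  "Sat_hull F X = \<Inter> {S \<in> Sat F. X \<subseteq> S}"

definition Sat_gen :: "nat \<Rightarrow> nat set \<Rightarrow> nat set \<Rightarrow> bool" where
  "Sat_gen F S X \<longleftrightarrow> Sat_set F X \<and> S = Sat_hull F X"

definition Sat_mingen :: "nat \<Rightarrow> nat set \<Rightarrow> nat set \<Rightarrow> bool" where
  "Sat_mingen F S X \<longleftrightarrow> Sat_gen F S X \<and> (\<forall>Y. Y \<subset> X \<longrightarrow> S \<noteq> Sat_hull F Y)"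

definition Sat_rank :: "nat \<Rightarrow> nat set \<Rightarrow> nat" where
  "Sat_rank F S = card (THE X. Sat_mingen F S X)"

end

theory Submission
  imports Defs
begin

text \<open>
  For \<open>S \<in> Sat F\<close> write \<open>d(x) = d\<^sub>S(x)\<close>. The minimal \<open>Sat(F)\<close>-system of
  generators of \<open>S\<close> consists of the elements \<open>0 < x < F\<close> of \<open>S\<close> at which \<open>d\<close> drops,
  i.e. \<open>d(x - 1)\<close> does not divide \<open>x\<close>; so the rank is the number of drops. At each drop
  the new value of \<open>d\<close> is a proper divisor of the old one, hence at most half of it, and it
  divides the distance to the previous drop. Thus the last drop \<open>x\<close> satisfies
  \<open>d(x) (2\<^sup>p - 1) \<le> x < F\<close>, and saturation forbids \<open>d(x) \<dvd> F\<close>, so \<open>a \<le> d(x)\<close>.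
  Conversely, if \<open>a (2\<^sup>p - 1) < F\<close>, the set consisting of \<open>0\<close>, all integers above \<open>F\<close>,
  and for each \<open>j < p\<close> the multiples of \<open>a 2\<^sup>j\<close> from \<open>a (2\<^sup>p - 2\<^sup>j)\<close> on, is a
  saturated numerical semigroup with Frobenius number \<open>F\<close> (as \<open>a\<close> does not divide \<open>F\<close>)
  whose drops are exactly the \<open>p\<close> points \<open>a (2\<^sup>p - 2\<^sup>j)\<close>.
\<close>

lemma Gcd_dvd_Gcd_subset: "A \<subseteq> B \<Longrightarrow> Gcd B dvd Gcd (A :: 'a :: semiring_Gcd set)"
  by (intro Gcd_greatest) (auto intro: Gcd_dvd)

lemma dA_antimono: "a \<le> b \<Longrightarrow> dA S b dvd dA S a"
  unfolding dA_def by (rule Gcd_dvd_Gcd_subset) auto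

lemma dA_dvd: "x \<in> S \<Longrightarrow> dA S x dvd x"
  unfolding dA_def by (rule Gcd_dvd) auto

lemma dA_dvd_dA_if_subset: "{z \<in> S. z \<le> x} \<subseteq> T \<Longrightarrow> dA T x dvd dA S x"
  unfolding dA_def by (rule Gcd_dvd_Gcd_subset) auto

lemma dA_eq_0_iff: "dA S x = 0 \<longleftrightarrow> {z \<in> S. z \<le> x} \<subseteq> {0}"
  unfolding dA_def by simp

lemma dA_mem: "y \<in> S \<Longrightarrow> 0 < y \<Longrightarrow> dA S y = gcd (dA S (y - 1)) y"
proof -
  assume "y \<in> S" "0 < y"
  then have "{z \<in> S. z \<le> y} = insert y {z \<in> S. z \<le> y - 1}" by auto
  then show ?thesis unfolding dA_def by (simp add: gcd.commute)
qed

lemma dA_nonmem: "y \<notin> S \<Longrightarrow> dA S y = dA S (y - 1)"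
proof -
  assume "y \<notin> S"
  then have "{z \<in> S. z \<le> y} = {z \<in> S. z \<le> y - 1}" by (cases y) (auto simp: le_Suc_eq)
  then show ?thesis unfolding dA_def by simp
qed

lemma saturated_zero: "saturated S \<Longrightarrow> 0 \<in> S"
  unfolding saturated_def numerical_semigroup_def by blast

lemma saturated_add: "saturated S \<Longrightarrow> x \<in> S \<Longrightarrow> y \<in> S \<Longrightarrow> x + y \<in> S"
  unfolding saturated_def numerical_semigroup_def by blast

lemma saturated_finite_gaps: "saturated S \<Longrightarrow> finite (UNIV - S)"
  unfolding saturated_def numerical_semigroup_def by blast

lemma saturated_add_dvd:
  assumes "saturated S" "u \<in> S" "u \<noteq> 0" "dA S u dvd t"
  shows "u + t \<in> S"
  using assms(2-4)
proof (induction t arbitrary: u rule: less_induct)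
  case (less t)
  show ?case
  proof (cases "t = 0")
    case True
    then show ?thesis using less by simp
  next
    case False
    define v where "v = u + dA S u"
    have v: "v \<in> S" "v \<noteq> 0"
      using assms(1) less.prems unfolding saturated_def v_def by auto
    have "dA S u \<le> t" "dA S u \<noteq> 0" using less.prems False by (auto simp: dvd_imp_le)
    have "dA S v dvd dA S u" unfolding v_def by (rule dA_antimono) simp
    moreover have "dA S u dvd t - dA S u" using less.prems by (simp add: dvd_diff_nat)
    ultimately have "v + (t - dA S u) \<in> S"
      using less.IH[of "t - dA S u" v] v \<open>dA S u \<noteq> 0\<close> False dvd_trans by auto
    then show ?thesis using \<open>dA S u \<le> t\<close> unfolding v_def by simp
  qed
qed

lemma Sat_iff: "S \<in> Sat F \<longleftrightarrow> saturated S \<and> F \<notin> S \<and> (\<forall>y>F. y \<in> S)"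
proof
  assume "S \<in> Sat F"
  then have sat: "saturated S" and ne: "UNIV - S \<noteq> {}" and Max: "Max (UNIV - S) = F"
    unfolding Sat_def frobenius_def by auto
  have fin: "finite (UNIV - S)" using sat by (rule saturated_finite_gaps)
  show "saturated S \<and> F \<notin> S \<and> (\<forall>y>F. y \<in> S)"
    using sat Max_in[OF fin ne] Max_ge[OF fin] Max by force
next
  assume S: "saturated S \<and> F \<notin> S \<and> (\<forall>y>F. y \<in> S)"
  have "Max (UNIV - S) = F"
    by (rule Max_eqI) (use S saturated_finite_gaps in \<open>auto simp: not_less\<close>)
  then show "S \<in> Sat F" unfolding Sat_def frobenius_def using S by auto
qed

lemma SatD:
  assumes "S \<in> Sat F"
  shows "saturated S" "F \<notin> S" "F < y \<Longrightarrow> y \<in> S"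
  using assms by (auto simp: Sat_iff)

lemma Sat_dA_not_dvd:
  assumes S: "S \<in> Sat F" and x: "x \<in> S" "0 < x" "x < F"
  shows "\<not> dA S x dvd F"
proof
  assume "dA S x dvd F"
  then have "dA S x dvd F - x" using dA_dvd[OF x(1)] by (simp add: dvd_diff_nat)
  then have "x + (F - x) \<in> S" using saturated_add_dvd[OF SatD(1)[OF S] x(1)] x(2) by simp
  then show False using SatD(2)[OF S] x(3) by simp
qed

text \<open>The points below \<open>F\<close> where \<open>d\<^sub>S\<close> drops; they form the minimal \<open>Sat(F)\<close>-system of \<open>S\<close>.\<close>

definition jumps :: "nat \<Rightarrow> nat set \<Rightarrow> nat set" where
  "jumps F S = {x \<in> S. 0 < x \<and> x < F \<and> \<not> dA S (x - 1) dvd x}"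

lemma jumps_finite: "finite (jumps F S)"
  by (rule finite_subset[of _ "{..<F}"]) (auto simp: jumps_def)

lemma dA_eq_if_no_jumps:
  assumes "x \<le> k" "k < F" "\<And>y. x < y \<Longrightarrow> y \<le> k \<Longrightarrow> y \<notin> jumps F S"
  shows "dA S k = dA S x"
  using assms
proof (induction k rule: dec_induct)
  case base
  then show ?case by simp
next
  case (step k)
  then have IH: "dA S k = dA S x" and "Suc k \<notin> jumps F S" by simp_all
  show ?case
  proof (cases "Suc k \<in> S")
    case True
    then have "dA S k dvd Suc k" using \<open>Suc k \<notin> jumps F S\<close> step.prems unfolding jumps_def by auto
    then show ?thesis using dA_mem[OF True] IH by (simp add: gcd_nat.absorb1)
  next
    case False
    then show ?thesis using dA_nonmem[OF False] IH by simp
  qed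
qed

lemma jump_exists:
  assumes s: "s \<in> S" "0 < s" "s < F"
  shows "\<exists>x\<in>jumps F S. x \<le> s"
proof -
  define m where "m = (LEAST z. z \<in> S \<and> 0 < z)"
  have m: "m \<in> S" "0 < m" "m \<le> s"
    using LeastI[of "\<lambda>z. z \<in> S \<and> 0 < z" s] Least_le[of "\<lambda>z. z \<in> S \<and> 0 < z" s] s
    unfolding m_def by auto
  have "{z \<in> S. z \<le> m - 1} \<subseteq> {0}"
    using Least_le[of "\<lambda>z. z \<in> S \<and> 0 < z"] m(2) unfolding m_def by force
  then have "dA S (m - 1) = 0" by (simp add: dA_eq_0_iff)
  then have "m \<in> jumps F S" using m s unfolding jumps_def by auto
  then show ?thesis using m by blast
qed

lemma last_jump_below:
  assumes "y \<in> jumps F S" "y \<le> k" "k < F"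
  obtains x where "x \<in> jumps F S" "x \<le> k" "dA S k = dA S x"
    "\<And>z. z \<in> jumps F S \<Longrightarrow> z \<le> k \<Longrightarrow> z \<le> x"
proof -
  let ?A = "{z \<in> jumps F S. z \<le> k}"
  have fin: "finite ?A" using jumps_finite by simp
  define x where "x = Max ?A"
  have "x \<in> ?A" unfolding x_def by (rule Max_in[OF fin]) (use assms in auto)
  moreover have last: "\<And>z. z \<in> jumps F S \<Longrightarrow> z \<le> k \<Longrightarrow> z \<le> x"
    unfolding x_def using Max_ge[OF fin] by simp
  moreover have "dA S k = dA S x"
    by (rule dA_eq_if_no_jumps) (use \<open>x \<in> ?A\<close> assms(3) last in force)+
  ultimately show thesis using that by blast
qed

lemma Sat_subset_if_jumps_subset:
  assumes S: "S \<in> Sat F" and T: "T \<in> Sat F" and J: "jumps F S \<subseteq> T"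
  shows "S \<subseteq> T"
proof -
  have "s \<in> S \<longrightarrow> s \<in> T" for s
  proof (induction s rule: less_induct)
    case (less s)
    show ?case
    proof
      assume sS: "s \<in> S"
      consider "s = 0" | "F \<le> s" | "0 < s" "s < F" by linarith
      then show "s \<in> T"
      proof cases
        case 1
        then show ?thesis using saturated_zero[OF SatD(1)[OF T]] by simp
      next
        case 2
        then show ?thesis using sS SatD(2)[OF S] SatD(3)[OF T] by (cases "s = F") auto
      next
        case 3
        obtain y where "y \<in> jumps F S" "y \<le> s" using jump_exists[OF sS 3] by blast
        then obtain x where x: "x \<in> jumps F S" "x \<le> s" "dA S s = dA S x"
          using last_jump_below 3(2) by blast
        have xS: "x \<in> S" "x \<noteq> 0" using x(1) unfolding jumps_def by auto
        show ?thesis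
        proof (cases "x = s")
          case True
          then show ?thesis using x(1) J by auto
        next
          case False
          then have "x < s" using x(2) by simp
          have "dA T x dvd dA S x"
            by (rule dA_dvd_dA_if_subset) (use less.IH \<open>x < s\<close> in auto)
          also have "dA S x dvd s - x"
            using dA_dvd[OF xS(1)] dA_dvd[OF sS] x(3) by (simp add: dvd_diff_nat)
          finally have "x + (s - x) \<in> T"
            using saturated_add_dvd[OF SatD(1)[OF T]] J x(1) xS(2) by blast
          then show ?thesis using \<open>x < s\<close> by simp
        qed
      qed
    qed
  qed
  then show ?thesis by blast
qed

lemma dA_pred_dvd_below: "v \<in> S \<Longrightarrow> v < x \<Longrightarrow> dA S (x - 1) dvd v"
  using dA_antimono[of v "x - 1" S] dA_dvd[of v S] dvd_trans by fastforce

lemma jump_not_sum: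
  assumes "x \<in> jumps F S" "u \<in> S" "u < x" "dA S (x - 1) dvd v"
  shows "u + v \<noteq> x"
proof
  assume "u + v = x"
  moreover have "dA S (x - 1) dvd u" using dA_pred_dvd_below assms(2,3) .
  ultimately have "dA S (x - 1) dvd x" using assms(4) by auto
  then show False using assms(1) unfolding jumps_def by simp
qed

lemma numerical_semigroup_remove_jump:
  assumes sat: "saturated S" and x: "x \<in> jumps F S"
  shows "numerical_semigroup (S - {x})"
  unfolding numerical_semigroup_def
proof (intro conjI ballI)
  show "0 \<in> S - {x}" using saturated_zero[OF sat] x unfolding jumps_def by auto
next
  fix u v assume uv: "u \<in> S - {x}" "v \<in> S - {x}"
  have "u + v \<noteq> x"
  proof (cases "u = 0 \<or> v = 0")
    case False
    then show ?thesis
      using jump_not_sum[OF x, of u v] dA_pred_dvd_below[of v S x] uv by force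
  qed (use uv in auto)
  then show "u + v \<in> S - {x}" using saturated_add[OF sat] uv by simp
next
  have "UNIV - (S - {x}) = insert x (UNIV - S)" using x unfolding jumps_def by auto
  then show "finite (UNIV - (S - {x}))" using saturated_finite_gaps[OF sat] by simp
qed

lemma saturated_remove_jump:
  assumes sat: "saturated S" and x: "x \<in> jumps F S"
  shows "saturated (S - {x})"
  unfolding saturated_def
proof (intro conjI numerical_semigroup_remove_jump[OF assms] ballI impI)
  fix y assume y: "y \<in> S - {x}" "y \<noteq> 0"
  show "y + dA (S - {x}) y \<in> S - {x}"
  proof (cases "y < x")
    case True
    then have "{z \<in> S - {x}. z \<le> y} = {z \<in> S. z \<le> y}" by auto
    then have "dA (S - {x}) y = dA S y" unfolding dA_def by simp
    moreover have "y + dA S y \<noteq> x"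
      using jump_not_sum[OF x] dA_antimono[of y "x - 1" S] y True by simp
    ultimately show ?thesis using sat y unfolding saturated_def by auto
  next
    case False
    then have "x < y" using y by auto
    have "dA S y dvd dA (S - {x}) y" by (rule dA_dvd_dA_if_subset) auto
    then have "y + dA (S - {x}) y \<in> S" using saturated_add_dvd[OF sat] y by blast
    then show ?thesis using \<open>x < y\<close> by simp
  qed
qed

lemma Sat_remove_jump: "S \<in> Sat F \<Longrightarrow> x \<in> jumps F S \<Longrightarrow> S - {x} \<in> Sat F"
  using saturated_remove_jump[of S x F] by (auto simp: Sat_iff jumps_def)

lemma Sat_hull_eq:
  assumes S: "S \<in> Sat F" and "jumps F S \<subseteq> X" "X \<subseteq> S"
  shows "Sat_hull F X = S"
proof
  show "Sat_hull F X \<subseteq> S" unfolding Sat_hull_def using assms by auto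
  show "S \<subseteq> Sat_hull F X"
    unfolding Sat_hull_def using Sat_subset_if_jumps_subset[OF S] assms by blast
qed

lemma Sat_hull_neq:
  assumes S: "S \<in> Sat F" and "Y \<subseteq> S" "x \<in> jumps F S" "x \<notin> Y"
  shows "Sat_hull F Y \<noteq> S"
proof -
  have "Sat_hull F Y \<subseteq> S - {x}"
    unfolding Sat_hull_def using Sat_remove_jump[OF S assms(3)] assms by auto
  moreover have "x \<in> S" using assms unfolding jumps_def by auto
  ultimately show ?thesis by auto
qed

lemma Sat_mingen_iff:
  assumes S: "S \<in> Sat F"
  shows "Sat_mingen F S X \<longleftrightarrow> X = jumps F S"
proof
  assume min: "Sat_mingen F S X"
  then have hull: "S = Sat_hull F X" unfolding Sat_mingen_def Sat_gen_def by auto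
  then have XS: "X \<subseteq> S" unfolding Sat_hull_def by auto
  have "jumps F S \<subseteq> X" using Sat_hull_neq[OF S XS] hull by auto
  moreover have "Sat_hull F (jumps F S) = S"
    using Sat_hull_eq[OF S order.refl] \<open>jumps F S \<subseteq> X\<close> XS by blast
  then have "\<not> jumps F S \<subset> X" using min unfolding Sat_mingen_def by auto
  ultimately show "X = jumps F S" by blast
next
  assume X: "X = jumps F S"
  have XS: "X \<subseteq> S" unfolding X jumps_def by auto
  have "Sat_set F X" unfolding Sat_set_def Delta_def using X XS S unfolding jumps_def by auto
  moreover have "S = Sat_hull F X" using Sat_hull_eq[OF S] X XS by auto
  moreover have "S \<noteq> Sat_hull F Y" if "Y \<subset> X" for Y
    using Sat_hull_neq[OF S, of Y] that X XS by blast
  ultimately show "Sat_mingen F S X" unfolding Sat_mingen_def Sat_gen_def by auto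
qed

lemma Sat_rank_eq_card_jumps:
  assumes "S \<in> Sat F"
  shows "Sat_rank F S = card (jumps F S)"
proof -
  have "(THE X. Sat_mingen F S X) = jumps F S"
    by (rule the_equality) (simp_all add: Sat_mingen_iff[OF assms])
  then show ?thesis unfolding Sat_rank_def by simp
qed

lemma dA_halves_at_next_jump:
  assumes x': "x' \<in> jumps F S" and x: "x \<in> jumps F S" and "x' < x"
    and d': "dA S (x - 1) = dA S x'"
  shows "2 * dA S x \<le> dA S x'" "dA S x \<le> x - x'"
proof -
  have xS: "x \<in> S" "0 < x" "\<not> dA S x' dvd x" using x d' unfolding jumps_def by auto
  have x'S: "x' \<in> S" "0 < x'" using x' unfolding jumps_def by auto
  have d: "dA S x = gcd (dA S x') x" using dA_mem[OF xS(1,2)] d' by simp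
  have "dA S x' \<noteq> 0" using dA_dvd[OF x'S(1)] x'S(2) by (metis dvd_0_left_iff neq0_conv)
  obtain c where c: "dA S x' = dA S x * c" using d by (metis gcd_dvd1 dvdE)
  have "c \<noteq> 0" using c \<open>dA S x' \<noteq> 0\<close> by auto
  moreover have "c \<noteq> 1" using c xS(3) d by (metis gcd_dvd2 mult.right_neutral)
  ultimately show "2 * dA S x \<le> dA S x'" using c by simp
  have "dA S x dvd x - x'"
    using d dA_dvd[OF x'S(1)] by (simp add: dvd_diff_nat dvd_trans[of _ "dA S x'"])
  then show "dA S x \<le> x - x'" using \<open>x' < x\<close> by (simp add: dvd_imp_le)
qed

lemma jumps_chain_bound:
  "x \<in> jumps F S \<Longrightarrow> dA S x * 2 ^ card {y \<in> jumps F S. y \<le> x} \<le> x + dA S x"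
proof (induction x rule: less_induct)
  case (less x)
  let ?J = "\<lambda>x. {y \<in> jumps F S. y \<le> x}"
  have x: "x \<in> S" "0 < x" "x < F" using less.prems unfolding jumps_def by auto
  show ?case
  proof (cases "\<exists>y\<in>jumps F S. y < x")
    case False
    then have "?J x = {x}" using less.prems by force
    moreover have "dA S x \<le> x" using dA_dvd[OF x(1)] x(2) by (simp add: dvd_imp_le)
    ultimately show ?thesis by simp
  next
    case True
    then obtain y where y: "y \<in> jumps F S" "y \<le> x - 1" by auto
    have "x - 1 < F" using x(3) by simp
    then obtain x' where x': "x' \<in> jumps F S" "x' \<le> x - 1" "dA S (x - 1) = dA S x'"
      and last: "\<And>z. z \<in> jumps F S \<Longrightarrow> z \<le> x - 1 \<Longrightarrow> z \<le> x'"
      using last_jump_below[OF y] by blast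
    have "x' < x" using x'(2) x(2) by linarith
    have "?J x = insert x (?J x')" using last less.prems \<open>x' < x\<close> by fastforce
    then have card: "card (?J x) = Suc (card (?J x'))" using \<open>x' < x\<close> by simp
    define K where "K = (2::nat) ^ card (?J x')"
    have IH: "dA S x' * K \<le> x' + dA S x'" using less.IH[OF \<open>x' < x\<close> x'(1)] K_def by simp
    note halves = dA_halves_at_next_jump[OF x'(1) less.prems \<open>x' < x\<close> x'(3)]
    have "dA S x' - 2 * dA S x \<le> (dA S x' - 2 * dA S x) * K" unfolding K_def by simp
    moreover have "dA S x' * K = 2 * dA S x * K + (dA S x' - 2 * dA S x) * K"
      using halves(1) by (simp add: add_mult_distrib[symmetric])
    ultimately have "2 * dA S x * K \<le> x + dA S x" using IH halves \<open>x' < x\<close> by linarith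
    then show ?thesis using card K_def by (simp add: mult.commute mult.left_commute)
  qed
qed

lemma Sat_card_jumps_bound:
  assumes S: "S \<in> Sat F" and p: "0 < card (jumps F S)"
  shows "(LEAST a::nat. a > 0 \<and> \<not> a dvd F) * (2 ^ card (jumps F S) - 1) < F"
proof -
  let ?p = "card (jumps F S)"
  define x where "x = Max (jumps F S)"
  have "x \<in> jumps F S" unfolding x_def using jumps_finite p by (auto intro: Max_in)
  then have x: "x \<in> S" "0 < x" "x < F" unfolding jumps_def by auto
  have "{y \<in> jumps F S. y \<le> x} = jumps F S"
    using Max_ge[OF jumps_finite] unfolding x_def by auto
  then have chain: "dA S x * 2 ^ ?p \<le> x + dA S x"
    using jumps_chain_bound[OF \<open>x \<in> jumps F S\<close>] by simp
  have "0 < dA S x" using dA_dvd[OF x(1)] x(2) by (cases "dA S x") auto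
  then have "(LEAST a::nat. a > 0 \<and> \<not> a dvd F) \<le> dA S x"
    using Sat_dA_not_dvd[OF S x] by (intro Least_le) simp
  then have "(LEAST a::nat. a > 0 \<and> \<not> a dvd F) * (2 ^ ?p - 1) \<le> dA S x * (2 ^ ?p - 1)"
    by simp
  also have "\<dots> = dA S x * 2 ^ ?p - dA S x" by (simp add: diff_mult_distrib2)
  also have "\<dots> \<le> x" using chain by simp
  finally show ?thesis using x(3) by simp
qed

definition stair :: "nat \<Rightarrow> nat \<Rightarrow> nat \<Rightarrow> nat" where
  "stair a p j = a * 2 ^ p - a * 2 ^ j"

definition stair_level :: "nat \<Rightarrow> nat \<Rightarrow> nat \<Rightarrow> nat" where
  "stair_level a p y = (LEAST j. stair a p j \<le> y)"

definition stair_semigroup :: "nat \<Rightarrow> nat \<Rightarrow> nat \<Rightarrow> nat set" where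
  "stair_semigroup F a p = {y. F < y} \<union>
     {y. y < F \<and> (y = 0 \<or> (stair_level a p y < p \<and> a * 2 ^ stair_level a p y dvd y))}"

lemma stair_antimono: "j \<le> j' \<Longrightarrow> stair a p j' \<le> stair a p j"
  unfolding stair_def by (intro diff_le_mono2 mult_le_mono2) simp

lemma stair_strict_antimono: "j < j' \<Longrightarrow> j' \<le> p \<Longrightarrow> 0 < a \<Longrightarrow> stair a p j' < stair a p j"
proof -
  assume "j < j'" "j' \<le> p" "0 < a"
  then have "a * 2 ^ j < a * 2 ^ j'" "a * 2 ^ j' \<le> a * 2 ^ p" by simp_all
  then show ?thesis unfolding stair_def by linarith
qed

lemma stair_top: "stair a p p = 0"
  unfolding stair_def by simp

lemma stair_pos: "j < p \<Longrightarrow> 0 < a \<Longrightarrow> 0 < stair a p j"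
  using stair_strict_antimono[of j p p a] stair_top[of a p] by simp

lemma stair_diff_Suc:
  assumes "Suc j \<le> p"
  shows "stair a p j - stair a p (Suc j) = a * 2 ^ j"
proof -
  have "a * 2 ^ Suc j \<le> a * 2 ^ p" using assms by (intro mult_le_mono2 power_increasing) auto
  moreover have "a * 2 ^ Suc j = 2 * (a * 2 ^ j)" by simp
  ultimately show ?thesis unfolding stair_def by linarith
qed

lemma mult_pow2_dvd: "i \<le> j \<Longrightarrow> a * 2 ^ i dvd a * (2::nat) ^ j"
  by (intro mult_dvd_mono) (auto simp: le_imp_power_dvd)

lemma stair_level_le: "stair a p (stair_level a p y) \<le> y"
  unfolding stair_level_def by (rule LeastI[of _ p]) (simp add: stair_top)

lemma stair_level_antimono: "y \<le> y' \<Longrightarrow> stair_level a p y' \<le> stair_level a p y"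
  unfolding stair_level_def[of a p y'] by (rule Least_le) (use stair_level_le[of a p y] in simp)

lemma stair_level_stair: "j \<le> p \<Longrightarrow> 0 < a \<Longrightarrow> stair_level a p (stair a p j) = j"
  unfolding stair_level_def
proof (rule Least_equality)
  fix i assume "j \<le> p" "0 < a" "stair a p i \<le> stair a p j"
  then show "j \<le> i" using stair_strict_antimono[of i j p a] by (cases "i < j") auto
qed simp

lemma stair_level_stair_pred:
  assumes "j < p" "0 < a"
  shows "stair_level a p (stair a p j - 1) = Suc j"
  unfolding stair_level_def
proof (rule Least_equality)
  show "stair a p (Suc j) \<le> stair a p j - 1"
    using stair_strict_antimono[of j "Suc j" p a] assms by simp
  fix i assume "stair a p i \<le> stair a p j - 1"
  then show "Suc j \<le> i"
    using stair_antimono[of i j a p] stair_pos[OF assms] by (cases "i \<le> j") auto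
qed

locale stair_construction =
  fixes F a p :: nat
  assumes a_pos: "0 < a" and not_dvd: "\<not> a dvd F" and small: "a * (2 ^ p - 1) < F"
begin

abbreviation "S \<equiv> stair_semigroup F a p"
abbreviation "L \<equiv> stair_level a p"
abbreviation "s \<equiv> stair a p"

lemma stair_less: "s j < F"
proof -
  have "s j \<le> s 0" by (rule stair_antimono) simp
  also have "s 0 = a * (2 ^ p - 1)" unfolding stair_def by (simp add: diff_mult_distrib2)
  finally show ?thesis using small by simp
qed

lemma level_dvd_below: "y < F \<Longrightarrow> z \<in> S \<Longrightarrow> z \<le> y \<Longrightarrow> a * 2 ^ L y dvd z"
proof -
  assume "y < F" "z \<in> S" "z \<le> y"
  then have "z = 0 \<or> a * 2 ^ L z dvd z" unfolding stair_semigroup_def by auto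
  moreover have "L y \<le> L z" using \<open>z \<le> y\<close> by (rule stair_level_antimono)
  ultimately show ?thesis using mult_pow2_dvd dvd_trans by blast
qed

lemma stair_mem: "j < p \<Longrightarrow> s j \<in> S"
proof -
  assume j: "j < p"
  have "L (s j) = j" using stair_level_stair[of j p a] j a_pos by simp
  moreover have "a * 2 ^ j dvd s j"
    unfolding stair_def using mult_pow2_dvd[of j p] j by (intro dvd_diff_nat) auto
  ultimately show ?thesis unfolding stair_semigroup_def using stair_less j by auto
qed

lemma mem_below_F: "y \<in> S \<Longrightarrow> y < F \<Longrightarrow> y \<noteq> 0 \<Longrightarrow> L y < p \<and> a * 2 ^ L y dvd y"
  unfolding stair_semigroup_def by auto

lemma numerical_semigroup: "numerical_semigroup S"
  unfolding numerical_semigroup_def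
proof (intro conjI ballI)
  show "0 \<in> S" unfolding stair_semigroup_def using not_dvd by (cases F) auto
next
  fix x y assume xy: "x \<in> S" "y \<in> S"
  show "x + y \<in> S"
  proof (cases "x = 0 \<or> y = 0 \<or> F < x + y")
    case False
    then have "x < F" "y < F" using xy unfolding stair_semigroup_def by auto
    then have "a dvd x" "a dvd y" using xy mem_below_F False dvd_mult_left by blast+
    then have "a dvd x + y" by simp
    then have "x + y \<noteq> F" using not_dvd by auto
    moreover have "L (x + y) \<le> L x" by (rule stair_level_antimono) simp
    moreover have "a * 2 ^ L (x + y) dvd x + y"
      using level_dvd_below[of "x + y" x] level_dvd_below[of "x + y" y] xy False
        \<open>x + y \<noteq> F\<close> by simp
    ultimately show ?thesis
      unfolding stair_semigroup_def using False mem_below_F[OF xy(1)] \<open>x < F\<close> by auto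
  qed (use xy in \<open>auto simp: stair_semigroup_def\<close>)
next
  have "UNIV - S \<subseteq> {..F}" unfolding stair_semigroup_def by auto
  then show "finite (UNIV - S)" by (rule finite_subset) simp
qed

lemma level_dvd_dA: "y < F \<Longrightarrow> a * 2 ^ L y dvd dA S y"
  unfolding dA_def by (rule Gcd_greatest) (use level_dvd_below in auto)

lemma saturated: "saturated S"
  unfolding saturated_def
proof (intro conjI numerical_semigroup ballI impI)
  fix y assume y: "y \<in> S" "y \<noteq> 0"
  show "y + dA S y \<in> S"
  proof (cases "F < y")
    case False
    then have "y < F" using y unfolding stair_semigroup_def by auto
    have dvd: "a * 2 ^ L y dvd y + dA S y"
      using level_dvd_dA[OF \<open>y < F\<close>] level_dvd_below[of y y] y \<open>y < F\<close> by simp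
    have "y + dA S y \<noteq> F" using dvd_mult_left[OF dvd] not_dvd by auto
    moreover have level: "L (y + dA S y) \<le> L y" by (rule stair_level_antimono) simp
    moreover have "a * 2 ^ L (y + dA S y) dvd y + dA S y"
      using mult_pow2_dvd[OF level] dvd by (rule dvd_trans)
    ultimately show ?thesis
      unfolding stair_semigroup_def using mem_below_F[OF y(1) \<open>y < F\<close> y(2)] by auto
  qed (simp add: stair_semigroup_def)
qed

lemma in_Sat: "S \<in> Sat F"
  unfolding Sat_iff using saturated by (simp add: stair_semigroup_def)

lemma dA_below_F: "y < F \<Longrightarrow> L y < p \<Longrightarrow> dA S y = a * 2 ^ L y"
proof -
  assume y: "y < F" "L y < p"
  have "dA S y dvd s (L y)"
    unfolding dA_def by (rule Gcd_dvd) (use stair_mem y stair_level_le in auto)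
  moreover have "dA S y dvd a * 2 ^ L y"
  proof (cases "Suc (L y) < p")
    case True
    have "s (Suc (L y)) \<le> y"
      using stair_strict_antimono[of "L y" "Suc (L y)" p a] True a_pos stair_level_le[of a p y] by simp
    then have "dA S y dvd s (Suc (L y))"
      unfolding dA_def by (intro Gcd_dvd) (use stair_mem True in auto)
    then show ?thesis
      using \<open>dA S y dvd s (L y)\<close> stair_diff_Suc[of "L y" p a] True by (metis dvd_diff_nat less_imp_le)
  next
    case False
    then have "Suc (L y) = p" using y(2) by simp
    then have "s (L y) = a * 2 ^ L y" using stair_diff_Suc[of "L y" p a] stair_top[of a p] by simp
    then show ?thesis using \<open>dA S y dvd s (L y)\<close> by simp
  qed
  ultimately show ?thesis using level_dvd_dA[OF y(1)] by (simp add: dvd_antisym)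
qed

lemma dA_below_F_top: "y < F \<Longrightarrow> L y = p \<Longrightarrow> dA S y = 0"
  unfolding dA_eq_0_iff
  using stair_level_antimono[of _ y a p] mem_below_F by fastforce

lemma jumps_subset_stairs: "jumps F S \<subseteq> s ` {..<p}"
proof
  fix x assume "x \<in> jumps F S"
  then have x: "x \<in> S" "0 < x" "x < F" "\<not> dA S (x - 1) dvd x" unfolding jumps_def by auto
  have Lx: "L x < p" "a * 2 ^ L x dvd x" using mem_below_F x by auto
  have "s (L x) = x"
  proof (rule ccontr)
    assume "s (L x) \<noteq> x"
    then have "s (L x) \<le> x - 1" using stair_level_le[of a p x] by simp
    then have "L (x - 1) \<le> L x" unfolding stair_level_def[of a p "x - 1"] by (rule Least_le)
    moreover have "L x \<le> L (x - 1)" by (rule stair_level_antimono) simp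
    ultimately have "dA S (x - 1) = a * 2 ^ L x" using dA_below_F[of "x - 1"] Lx x(3) by simp
    then show False using x(4) Lx(2) by simp
  qed
  then show "x \<in> s ` {..<p}" using Lx by force
qed

lemma stair_in_jumps: "j < p \<Longrightarrow> s j \<in> jumps F S"
proof -
  assume j: "j < p"
  have x: "s j \<in> S" "0 < s j" "s j < F" using stair_mem stair_pos a_pos stair_less j by auto
  have L: "L (s j - 1) = Suc j" using stair_level_stair_pred j a_pos by simp
  have "\<not> dA S (s j - 1) dvd s j"
  proof (cases "Suc j < p")
    case True
    have "a * 2 ^ Suc j dvd s (Suc j)"
      unfolding stair_def using mult_pow2_dvd[of "Suc j" p] True by (intro dvd_diff_nat) auto
    moreover have "s j = s (Suc j) + a * 2 ^ j"
      using stair_diff_Suc[of j p a] stair_antimono[of j "Suc j" a p] True by simp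
    moreover have "\<not> a * 2 ^ Suc j dvd a * 2 ^ j" using a_pos by (auto dest: dvd_imp_le)
    ultimately have "\<not> a * 2 ^ Suc j dvd s j" by (simp add: dvd_add_right_iff)
    then show ?thesis using dA_below_F[of "s j - 1"] L True x(3) by simp
  next
    case False
    then show ?thesis using dA_below_F_top[of "s j - 1"] L j x by simp
  qed
  then show ?thesis unfolding jumps_def using x by simp
qed

lemma card_jumps: "card (jumps F S) = p"
proof -
  have "inj_on s {..<p}"
  proof (rule inj_onI)
    fix i j assume "i \<in> {..<p}" "j \<in> {..<p}" "s i = s j"
    then show "i = j" using stair_strict_antimono[of i j p a] stair_strict_antimono[of j i p a] a_pos
      by (cases i j rule: linorder_cases) auto
  qed
  moreover have "jumps F S = s ` {..<p}" using jumps_subset_stairs stair_in_jumps by blast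
  ultimately show ?thesis by (simp add: card_image)
qed

end

theorem corollary52:
  fixes F p :: nat
  assumes "F > 0" and "p > 0"
  shows "(\<exists>S\<in>Sat F. Sat_rank F S = p) \<longleftrightarrow>
         (LEAST a::nat. a > 0 \<and> \<not> a dvd F) * (2 ^ p - 1) < F"
proof
  assume "\<exists>S\<in>Sat F. Sat_rank F S = p"
  then obtain S where "S \<in> Sat F" "card (jumps F S) = p"
    using Sat_rank_eq_card_jumps by metis
  then show "(LEAST a::nat. a > 0 \<and> \<not> a dvd F) * (2 ^ p - 1) < F"
    using Sat_card_jumps_bound assms(2) by blast
next
  define a where "a = (LEAST a::nat. a > 0 \<and> \<not> a dvd F)"
  assume "(LEAST a::nat. a > 0 \<and> \<not> a dvd F) * (2 ^ p - 1) < F"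
  moreover have "a > 0 \<and> \<not> a dvd F" unfolding a_def
    by (rule LeastI[of _ "F + 1"]) (use assms in \<open>auto dest: dvd_imp_le\<close>)
  ultimately interpret stair_construction F a p by unfold_locales (auto simp: a_def)
  show "\<exists>S\<in>Sat F. Sat_rank F S = p"
    using in_Sat Sat_rank_eq_card_jumps[OF in_Sat] card_jumps by metis
qed

end
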